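(* For each integer $n\ge0$ let \[ \theta^\Delta_n(x)=\sum_{k=0}^n\frac{(n+k)!}{2^k(n-k)!\,k!}\,(x)_{n-k}, \] where $(x)_j=x(x-1)\cdots(x-j+1)$ and $(x)_0=1$. Then for every integer $n\ge0$ and every $x\in\mathbb{C}$, \[ (x-2n)\,\theta^\Delta_n(x+1)-4(x-n)\,\theta^\Delta_n(x)+3x\,\theta^\Delta_n(x-1)=0 . \]
   Context: $\theta^\Delta_n$ is called the difference reverse Bessel polynomial of degree $n$. *)

theory Defs
  imports Complex_Main
begin

definition falling_fact :: "complex \<Rightarrow> nat \<Rightarrow> complex" where
  "falling_fact x j = (\<Prod>i<j. x - of_nat i)"

definition theta_delta :: "nat \<Rightarrow> complex \<Rightarrow> complex" where
  "theta_delta n x = (\<Sum>k=0..n. of_nat (fact (n + k)) / (2 ^ k * of_nat (fact (n - k)) * of_nat (fact k))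
                        * falling_fact x (n - k))"

end

theory Submission
  imports Defs
begin

text \<open>
  Write L for the difference operator on the left-hand side. It maps the falling factorial
  (x)_j to a combination of (x)_j and (x)_(j-1), so it maps the k-th term a_k (x)_(n-k) of
  theta_n to a combination of (x)_(n-k) and (x)_(n-k-1). The ratio of consecutive coefficients,
  a_(k+1) / a_k = (n - k)(n + k + 1) / (2(k + 1)), makes these contributions telescope:
  a_k L (x)_(n-k) = G k - G (k + 1) with G k = 2k a_k (x)_(n-k), and G 0 = 0 = G (n + 1).
\<close>

definition bessel_diff_op :: "nat \<Rightarrow> (complex \<Rightarrow> complex) \<Rightarrow> complex \<Rightarrow> complex" where
  "bessel_diff_op n f x =
     (x - 2 * of_nat n) * f (x + 1) - 4 * (x - of_nat n) * f x + 3 * x * f (x - 1)"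

lemma bessel_diff_op_sum:
  "bessel_diff_op n (\<lambda>y. \<Sum>k\<in>A. c k * f k y) x = (\<Sum>k\<in>A. c k * bessel_diff_op n (f k) x)"
  by (simp add: bessel_diff_op_def sum_distrib_left sum_subtractf sum.distrib algebra_simps)

lemma falling_fact_0 [simp]: "falling_fact x 0 = 1"
  by (simp add: falling_fact_def)

lemma falling_fact_Suc: "falling_fact x (Suc j) = falling_fact x j * (x - of_nat j)"
  by (simp add: falling_fact_def)

lemma falling_fact_Suc_shift: "falling_fact (x + 1) (Suc j) = (x + 1) * falling_fact x j"
proof (induction j)
  case 0
  show ?case by (simp add: falling_fact_def)
next
  case (Suc j)
  have "falling_fact (x + 1) (Suc (Suc j)) = falling_fact (x + 1) (Suc j) * (x - of_nat j)"
    by (simp add: falling_fact_Suc)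
  also have "\<dots> = (x + 1) * falling_fact x (Suc j)"
    using Suc by (simp add: falling_fact_Suc)
  finally show ?case .
qed

lemma bessel_diff_op_falling_fact:
  "bessel_diff_op n (\<lambda>y. falling_fact y j) x =
     2 * (of_nat n - of_nat j) * falling_fact x j
     - of_nat j * (2 * of_nat n + 1 - of_nat j) * falling_fact x (j - 1)"
proof (cases j)
  case 0
  then show ?thesis by (simp add: bessel_diff_op_def algebra_simps)
next
  case (Suc i)
  have shift_up: "falling_fact (x + 1) j = (x + 1) * falling_fact x i"
    using Suc by (simp only: falling_fact_Suc_shift)
  have shift_down: "x * falling_fact (x - 1) j = falling_fact x i * (x - of_nat i) * (x - of_nat i - 1)"
    using Suc falling_fact_Suc_shift[of "x - 1" j] by (simp add: falling_fact_Suc algebra_simps)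
  have step: "falling_fact x j = falling_fact x i * (x - of_nat i)"
    using Suc by (simp only: falling_fact_Suc)
  have index: "j - 1 = i" "of_nat j = of_nat i + (1 :: complex)"
    using Suc by simp_all
  show ?thesis
    unfolding bessel_diff_op_def mult.assoc[of 3] shift_up shift_down step index
    by (simp add: algebra_simps)
qed

definition theta_coeff :: "nat \<Rightarrow> nat \<Rightarrow> complex" where
  "theta_coeff n k = of_nat (fact (n + k)) / (2 ^ k * of_nat (fact (n - k)) * of_nat (fact k))"

lemma theta_delta_eq_sum: "theta_delta n = (\<lambda>y. \<Sum>k=0..n. theta_coeff n k * falling_fact y (n - k))"
  by (simp add: fun_eq_iff theta_delta_def theta_coeff_def)

lemma theta_coeff_Suc:
  assumes "k < n"
  shows "2 * of_nat (Suc k) * theta_coeff n (Suc k) =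
           of_nat (n - k) * (of_nat n + of_nat k + 1) * theta_coeff n k"
proof -
  have "n - k = Suc (n - Suc k)"
    using assms by simp
  then have fact_diff: "fact (n - k) = (of_nat (n - k) :: complex) * fact (n - Suc k)"
    by (metis fact_Suc of_nat_fact)
  have fact_sum: "(fact (n + Suc k) :: complex) = (of_nat n + of_nat k + 1) * fact (n + k)"
    by (simp add: algebra_simps)
  have fact_Suc_k: "(fact (Suc k) :: complex) = of_nat (Suc k) * fact k"
    by simp
  have "of_nat (n - k) \<noteq> (0 :: complex)" "(fact (n - Suc k) :: complex) \<noteq> 0"
    using assms by simp_all
  then show ?thesis
    unfolding theta_coeff_def of_nat_fact fact_diff fact_sum fact_Suc_k
    by (simp add: field_simps del: of_nat_Suc)
qed

lemma theta_coeff_bessel_diff_op: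
  assumes "k \<le> n"
  shows "theta_coeff n k * bessel_diff_op n (\<lambda>y. falling_fact y (n - k)) x =
           2 * of_nat k * theta_coeff n k * falling_fact x (n - k)
           - (if k < n then 2 * of_nat (Suc k) * theta_coeff n (Suc k) * falling_fact x (n - Suc k)
              else 0)"
proof (cases "k < n")
  case True
  have "n - k - 1 = n - Suc k"
    by simp
  with True show ?thesis
    unfolding bessel_diff_op_falling_fact mult.assoc[symmetric] theta_coeff_Suc[OF True]
    by (simp add: of_nat_diff algebra_simps)
next
  case False
  with assms show ?thesis
    by (simp add: bessel_diff_op_def algebra_simps)
qed

theorem mainTheorem11:
  fixes n :: nat and x :: complex
  shows "(x - 2 * of_nat n) * theta_delta n (x + 1) - 4 * (x - of_nat n) * theta_delta n x
           + 3 * x * theta_delta n (x - 1) = 0"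
proof -
  define G where
    "G k = (if k \<le> n then 2 * of_nat k * theta_coeff n k * falling_fact x (n - k) else 0)" for k
  have "(x - 2 * of_nat n) * theta_delta n (x + 1) - 4 * (x - of_nat n) * theta_delta n x
          + 3 * x * theta_delta n (x - 1) = bessel_diff_op n (theta_delta n) x"
    by (simp add: bessel_diff_op_def)
  also have "\<dots> = (\<Sum>k=0..n. theta_coeff n k * bessel_diff_op n (\<lambda>y. falling_fact y (n - k)) x)"
    by (simp add: theta_delta_eq_sum bessel_diff_op_sum)
  also have "\<dots> = (\<Sum>k=0..n. G k - G (Suc k))"
    by (rule sum.cong) (auto simp: G_def theta_coeff_bessel_diff_op)
  also have "\<dots> = G 0 - G (Suc n)"
    using sum_Suc_diff[of 0 n "\<lambda>k. - G k"] by simp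
  also have "\<dots> = 0"
    by (simp add: G_def)
  finally show ?thesis .
qed

end
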